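(* Let $P\in\mathcal{P}$ and suppose $\nu:\mathcal{P}\to\mathcal{H}$ is pathwise differentiable at $P$ and that the local parameter space $\dot{\mathcal{H}}_P$ (the image of $\dot{\nu}_P$, equipped with the inner product of $\mathcal{H}$) is a reproducing kernel Hilbert space of real functions on a set $\mathcal{T}$, with feature map $t\mapsto K_t$. Define $\tilde{\phi}_P$ by $\tilde{\phi}_P(z)(t)=\dot{\nu}_P^*(K_t)(z)$ for $t\in\mathcal{T}$ and $P$-almost every $z$. Then: (i) if $\nu$ has an efficient influence function $\phi_P$ at $P$, then $\phi_P=\tilde{\phi}_P$ $P$-almost surely; (ii) if $\|\tilde{\phi}_P\|_{L^2(P;\mathcal{H})}<\infty$ (i.e. $\tilde\phi_P\in L^2(P;\mathcal H)$), then $\nu$ has an efficient influence function at $P$.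
   Context: Let $(\mathcal{Z},\mathbf{B})$ be a Polish space and $\mathcal{P}$ a set of probability distributions on it (the model), all dominated by a $\sigma$-finite measure $\lambda$. For $P\in\mathcal{P}$ and $s\in L^2(P)$, a submodel $\{P_\epsilon:\epsilon\in[0,\delta)\}\subset\mathcal{P}$ is quadratic mean differentiable at $P$ with score $s$ if $\|p_\epsilon^{1/2}-p^{1/2}-\epsilon s p^{1/2}/2\|_{L^2(\lambda)}=o(\epsilon)$ as $\epsilon\to0$, where $p_\epsilon=dP_\epsilon/d\lambda$, $p=dP/d\lambda$; $\mathscr{P}(P,\mathcal{P},s)$ denotes the set of such submodels. The tangent set at $P$ is $\{s\in L^2(P):\mathscr{P}(P,\mathcal{P},s)\neq\emptyset\}$ and the tangent space $\dot{\mathcal{P}}_P$ is its closed linear span in $L^2(P)$. $\mathcal{H}$ is a real separable Hilbert space. $\nu:\mathcal{P}\to\mathcal{H}$ is pathwise differentiable at $P$ if there is a continuous linear operator $\dot{\nu}_P:\dot{\mathcal{P}}_P\to\mathcal{H}$ (the local parameter) such that for every $s$ in the tangent set and every submodel in $\mathscr{P}(P,\mathcal{P},s)$, $\|\nu(P_\epsilon)-\nu(P)-\epsilon\dot{\nu}_P(s)\|_{\mathcal{H}}=o(\epsilon)$. Its Hilbert adjoint $\dot{\nu}_P^*:\mathcal{H}\to\dot{\mathcal{P}}_P$ is the efficient influence operator. Pointwise values $\dot{\nu}_P^*(h)(z)$ are taken from versions chosen so that $\{\dot{\nu}_P^*(h):h\in\mathcal{H}\}$ is a separable process: there exist a countable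 dense $\mathcal{H}'\subset\mathcal{H}$ and a $P$-probability-one set $\mathcal{Z}'$ such that for all $h\in\mathcal{H}$, $z\in\mathcal{Z}'$ there is a sequence $h_j\in\mathcal{H}'$ with $h_j\to h$ and $\dot{\nu}_P^*(h_j)(z)\to\dot{\nu}_P^*(h)(z)$. $\nu$ has efficient influence function (EIF) $\phi_P:\mathcal{Z}\to\mathcal{H}$ at $P$ if there is a $P$-probability-one set $\mathcal{Z}'$ with $\dot{\nu}_P^*(h)(z)=\langle h,\phi_P(z)\rangle_{\mathcal{H}}$ for all $h\in\mathcal{H}$, $z\in\mathcal{Z}'$. $L^2(P;\mathcal{H})$ is the space of Bochner measurable $f:\mathcal{Z}\to\mathcal{H}$ with $\|f\|_{L^2(P;\mathcal{H})}^2=\int\|f(z)\|_{\mathcal{H}}^2P(dz)<\infty$. *)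

theory Defs
  imports "HOL-Probability.Probability"
begin

text \<open>Square-integrable real functions w.r.t. a measure (elements of L2(P) given by representatives).\<close>
definition L2 :: "'z measure \<Rightarrow> ('z \<Rightarrow> real) set" where
  "L2 M = {f. f \<in> borel_measurable M \<and> integrable M (\<lambda>z. (f z)^2)}"

definition L2_norm :: "'z measure \<Rightarrow> ('z \<Rightarrow> real) \<Rightarrow> real" where
  "L2_norm M f = sqrt (\<integral>z. (f z)^2 \<partial>M)"

definition QMD_submodels ::
  "'z measure \<Rightarrow> 'z measure set \<Rightarrow> 'z measure \<Rightarrow> ('z \<Rightarrow> real) \<Rightarrow> (real \<Rightarrow> 'z measure) set" where
  "QMD_submodels lam model P s =
    {Pe. (\<exists>\<delta>>0. \<forall>\<epsilon>\<in>{0..<\<delta>}. Pe \<epsilon> \<in> model) \<and>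
      ((\<lambda>\<epsilon>. (\<integral>\<^sup>+ z. ennreal ((sqrt (enn2real (RN_deriv lam (Pe \<epsilon>) z))
               - sqrt (enn2real (RN_deriv lam P z))
               - \<epsilon> * s z * sqrt (enn2real (RN_deriv lam P z)) / 2)^2) \<partial>lam)
             / ennreal (\<epsilon>^2)) \<longlongrightarrow> 0) (at_right 0)}"

definition tangent_set :: "'z measure \<Rightarrow> 'z measure set \<Rightarrow> 'z measure \<Rightarrow> ('z \<Rightarrow> real) set" where
  "tangent_set lam model P = {s \<in> L2 P. QMD_submodels lam model P s \<noteq> {}}"

definition lin_span :: "('z \<Rightarrow> real) set \<Rightarrow> ('z \<Rightarrow> real) set" where
  "lin_span S = {(\<lambda>z. \<Sum>i<n. (c::nat \<Rightarrow> real) i * f i z) | n c f. \<forall>i<(n::nat). f i \<in> S}"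

definition tangent_space :: "'z measure \<Rightarrow> 'z measure set \<Rightarrow> 'z measure \<Rightarrow> ('z \<Rightarrow> real) set" where
  "tangent_space lam model P =
    {f \<in> L2 P. \<forall>e>0. \<exists>g\<in>lin_span (tangent_set lam model P). L2_norm P (\<lambda>z. f z - g z) < e}"

definition pathwise_differentiable ::
  "'z measure \<Rightarrow> 'z measure set \<Rightarrow> 'z measure \<Rightarrow> ('z measure \<Rightarrow> 'h::real_normed_vector)
    \<Rightarrow> (('z \<Rightarrow> real) \<Rightarrow> 'h) \<Rightarrow> bool" where
  "pathwise_differentiable lam model P nu dotnu \<longleftrightarrow>
    (\<forall>f g a b. f \<in> tangent_space lam model P \<longrightarrow> g \<in> tangent_space lam model P \<longrightarrow>
        dotnu (\<lambda>z. a * f z + b * g z) = a *\<^sub>R dotnu f + b *\<^sub>R dotnu g) \<and>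
    (\<exists>C. \<forall>f\<in>tangent_space lam model P. norm (dotnu f) \<le> C * L2_norm P f) \<and>
    (\<forall>s\<in>tangent_set lam model P. \<forall>Pe\<in>QMD_submodels lam model P s.
        ((\<lambda>\<epsilon>. norm (nu (Pe \<epsilon>) - nu P - \<epsilon> *\<^sub>R dotnu s) / \<epsilon>) \<longlongrightarrow> 0) (at_right 0))"

text \<open>dotnu_star is (a choice of versions of) the Hilbert adjoint of dotnu.\<close>
definition is_adjoint ::
  "'z measure \<Rightarrow> ('z \<Rightarrow> real) set \<Rightarrow> (('z \<Rightarrow> real) \<Rightarrow> 'h::real_inner) \<Rightarrow> ('h \<Rightarrow> 'z \<Rightarrow> real) \<Rightarrow> bool" where
  "is_adjoint P TS dotnu dotnu_star \<longleftrightarrow>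
    (\<forall>h. dotnu_star h \<in> TS) \<and>
    (\<forall>h. \<forall>s\<in>TS. inner (dotnu s) h = (\<integral>z. s z * dotnu_star h z \<partial>P))"

definition separable_process :: "'z measure \<Rightarrow> ('h::real_normed_vector \<Rightarrow> 'z \<Rightarrow> real) \<Rightarrow> bool" where
  "separable_process P X \<longleftrightarrow>
    (\<exists>H'. countable H' \<and> closure H' = UNIV \<and>
      (AE z in P. \<forall>h. \<exists>hs. (\<forall>j. hs j \<in> H') \<and> hs \<longlonglongrightarrow> h \<and> (\<lambda>j. X (hs j) z) \<longlonglongrightarrow> X h z))"

definition has_EIF :: "'z measure \<Rightarrow> ('h::real_inner \<Rightarrow> 'z \<Rightarrow> real) \<Rightarrow> ('z \<Rightarrow> 'h) \<Rightarrow> bool" where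
  "has_EIF P dotnu_star \<phi> \<longleftrightarrow> (AE z in P. \<forall>h. dotnu_star h z = inner h (\<phi> z))"

text \<open>The subspace Hd of H, with the inner product of H, is an RKHS of real functions on 'T:
  evf identifies each element with a function on 'T (linearly and injectively), Hd is complete
  (closed in H), and K t is the feature map (reproducing property).\<close>
definition is_RKHS :: "'h::real_inner set \<Rightarrow> ('h \<Rightarrow> 'T \<Rightarrow> real) \<Rightarrow> ('T \<Rightarrow> 'h) \<Rightarrow> bool" where
  "is_RKHS Hd evf K \<longleftrightarrow>
    subspace Hd \<and> closed Hd \<and> inj_on evf Hd \<and>
    (\<forall>a b x y. x \<in> Hd \<longrightarrow> y \<in> Hd \<longrightarrow> evf (a *\<^sub>R x + b *\<^sub>R y) = (\<lambda>t. a * evf x t + b * evf y t)) \<and>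
    (\<forall>t. K t \<in> Hd) \<and>
    (\<forall>t. \<forall>h\<in>Hd. inner (K t) h = evf h t)"

end

(*
  Write S for the local parameter space and X h for the adjoint process z \<mapsto> dotnu_star h z.
  Since the L2 norm of X h squared equals the inner product of dotnu (X h) with h, X h vanishes
  almost everywhere whenever h is orthogonal to S, and X is linear almost everywhere and bounded
  into L2.

  (i) If dotnu_star h z = <h, phi z>, testing phi z against countably many vectors of the
  orthogonal complement of S (the residuals d - proj d of a countable dense set) puts phi z
  in S almost surely; the reproducing property then gives
  evf (phi z) t = <K t, phi z> = dotnu_star (K t) z.

  (ii) For a square-integrable g with these values, the h with X h = <h, g> almost everywhere
  form a closed subspace (by boundedness of X) containing the orthogonal complement of S and
  every K t. The K t are total in S, so this subspace is the whole space, and separability of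
  the process exchanges "for every h, almost surely" with "almost surely, for every h".
*)

theory Submission
  imports Defs
begin

lemma parallelogram_law:
  fixes a b :: "'a::real_inner"
  shows "(norm (a + b))\<^sup>2 + (norm (a - b))\<^sup>2 = 2 * (norm a)\<^sup>2 + 2 * (norm b)\<^sup>2"
  by (simp add: power2_norm_eq_inner inner_add_left inner_add_right inner_diff_left
      inner_diff_right inner_commute[of b a])

lemma convex_minimizing_sequence_Cauchy:
  fixes S :: "'a::real_inner set"
  assumes "convex S" and y_in: "\<And>n. y n \<in> S"
    and y_near: "\<And>n. (dist x (y n))\<^sup>2 < (infdist x S)\<^sup>2 + 1 / Suc n"
  shows "Cauchy y"
proof -
  define d where "d = infdist x S"
  \<comment> \<open>The parallelogram law at the midpoint of \<open>y m\<close> and \<open>y n\<close>, which lies in \<open>S\<close> by convexity.\<close>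
  have y_close: "(dist (y m) (y n))\<^sup>2 \<le> 2 / Suc m + 2 / Suc n" for m n
  proof -
    have "(1/2) *\<^sub>R y m + (1/2) *\<^sub>R y n \<in> S"
      using assms(1) y_in by (intro convexD) auto
    then have "d\<^sup>2 \<le> (dist x ((1/2) *\<^sub>R y m + (1/2) *\<^sub>R y n))\<^sup>2"
      using infdist_nonneg[of x S] by (simp add: d_def infdist_le power_mono)
    also have "\<dots> = (norm ((x - y m) + (x - y n)))\<^sup>2 / 4"
    proof -
      have "x - ((1/2) *\<^sub>R y m + (1/2) *\<^sub>R y n) = (1/2) *\<^sub>R ((x - y m) + (x - y n))"
        by (simp add: algebra_simps flip: scaleR_2)
      then show ?thesis by (simp add: dist_norm power_divide)
    qed
    finally have "4 * d\<^sup>2 \<le> (norm ((x - y m) + (x - y n)))\<^sup>2" by simp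
    moreover have "y m - y n = (x - y n) - (x - y m)" by simp
    ultimately show ?thesis
      using parallelogram_law[of "x - y m" "x - y n"] y_near[of m] y_near[of n]
      by (simp add: d_def dist_norm norm_minus_commute)
  qed
  show "Cauchy y"
  proof (rule metric_CauchyI)
    fix e :: real assume "0 < e"
    obtain N :: nat where N: "4 / e\<^sup>2 < N" using reals_Archimedean2 by blast
    have small: "2 / Suc k < e\<^sup>2 / 2" if "N \<le> k" for k
    proof -
      have "4 < real N * e\<^sup>2" using N \<open>0 < e\<close> by (simp add: field_simps)
      also have "\<dots> \<le> real (Suc k) * e\<^sup>2" using that by (intro mult_right_mono) auto
      finally show ?thesis by (simp add: field_simps)
    qed
    have "dist (y m) (y n) < e" if "N \<le> m" "N \<le> n" for m n
    proof -
      have "(dist (y m) (y n))\<^sup>2 < e\<^sup>2"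
        using y_close[of m n] small[OF that(1)] small[OF that(2)] by linarith
      then show ?thesis using \<open>0 < e\<close> by (simp add: power_less_imp_less_base)
    qed
    then show "\<exists>N. \<forall>m\<ge>N. \<forall>n\<ge>N. dist (y m) (y n) < e" by blast
  qed
qed

lemma nearest_point_exists:
  fixes S :: "'a::{real_inner, complete_space} set"
  assumes "convex S" "closed S" "S \<noteq> {}"
  shows "\<exists>p\<in>S. \<forall>s\<in>S. dist x p \<le> dist x s"
proof -
  define d where "d = infdist x S"
  have "\<exists>y\<in>S. (dist x y)\<^sup>2 < d\<^sup>2 + 1 / Suc n" for n
  proof -
    have "infdist x S < sqrt (d\<^sup>2 + 1 / Suc n)"
      using infdist_nonneg[of x S] by (simp add: d_def real_less_rsqrt)
    then obtain y where "y \<in> S" and "dist x y < sqrt (d\<^sup>2 + 1 / Suc n)"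
      using assms(3) by (auto simp: infdist_notempty cINF_less_iff)
    then have "(dist x y)\<^sup>2 < (sqrt (d\<^sup>2 + 1 / Suc n))\<^sup>2"
      by (intro power_strict_mono) auto
    then show ?thesis using \<open>y \<in> S\<close> by auto
  qed
  then obtain y where y_in: "\<And>n. y n \<in> S" and y_near: "\<And>n. (dist x (y n))\<^sup>2 < d\<^sup>2 + 1 / Suc n"
    by metis
  have "Cauchy y"
    using assms(1) y_in y_near unfolding d_def by (rule convex_minimizing_sequence_Cauchy)
  then obtain p where p: "y \<longlonglongrightarrow> p" using Cauchy_convergent convergent_def by blast
  have "p \<in> S" using closed_sequentially[OF assms(2) _ p] y_in by blast
  have "(dist x p)\<^sup>2 \<le> d\<^sup>2"
  proof (rule LIMSEQ_le)
    show "(\<lambda>n. (dist x (y n))\<^sup>2) \<longlonglongrightarrow> (dist x p)\<^sup>2" by (intro tendsto_intros p)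
    show "(\<lambda>n. d\<^sup>2 + 1 / Suc n) \<longlonglongrightarrow> d\<^sup>2"
      using tendsto_add[OF tendsto_const LIMSEQ_inverse_real_of_nat] by (simp add: inverse_eq_divide)
    show "\<exists>N. \<forall>n\<ge>N. (dist x (y n))\<^sup>2 \<le> d\<^sup>2 + 1 / Suc n" using y_near less_imp_le by blast
  qed
  then have "dist x p \<le> d" using infdist_nonneg[of x S] unfolding d_def by (rule power2_le_imp_le)
  then have "dist x p \<le> dist x s" if "s \<in> S" for s using infdist_le[OF that, of x] d_def by linarith
  then show ?thesis using \<open>p \<in> S\<close> by blast
qed

lemma nearest_point_subspace_orthogonal:
  fixes S :: "'a::real_inner set"
  assumes "subspace S" "p \<in> S" "\<forall>s\<in>S. norm (x - p) \<le> norm (x - s)" "s \<in> S"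
  shows "inner (x - p) s = 0"
proof (cases "s = 0")
  case False
  define c where "c = inner (x - p) s"
  define t where "t = c / (norm s)\<^sup>2"
  have "p + t *\<^sub>R s \<in> S" using assms by (simp add: subspace_add subspace_mul)
  then have "(norm (x - p))\<^sup>2 \<le> (norm ((x - p) - t *\<^sub>R s))\<^sup>2"
    using assms(3) by (simp add: power_mono algebra_simps)
  also have "\<dots> = (norm (x - p))\<^sup>2 - 2 * t * c + t\<^sup>2 * (norm s)\<^sup>2"
  proof -
    have "(norm (a - t *\<^sub>R s))\<^sup>2 = (norm a)\<^sup>2 - 2 * t * inner a s + t\<^sup>2 * (norm s)\<^sup>2" for a
      unfolding power2_norm_eq_inner
      by (simp add: inner_commute[of s a] power2_eq_square algebra_simps)
    then show ?thesis by (simp add: c_def)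
  qed
  also have "\<dots> = (norm (x - p))\<^sup>2 - c\<^sup>2 / (norm s)\<^sup>2"
    using False by (simp add: t_def field_simps power2_eq_square)
  finally have "c\<^sup>2 \<le> 0" using False by (simp add: divide_le_0_iff)
  then show ?thesis by (simp add: c_def)
qed simp

lemma orthogonal_projection_exists:
  fixes S :: "'a::{real_inner, complete_space} set"
  assumes "subspace S" "closed S"
  shows "\<exists>p\<in>S. \<forall>s\<in>S. inner (x - p) s = 0"
proof -
  have "S \<noteq> {}" using assms(1) subspace_0 by blast
  then obtain p where "p \<in> S" "\<forall>s\<in>S. dist x p \<le> dist x s"
    using nearest_point_exists[OF subspace_imp_convex[OF assms(1)] assms(2)] by blast
  then show ?thesis
    using nearest_point_subspace_orthogonal[OF assms(1) \<open>p \<in> S\<close>] by (auto simp: dist_norm)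
qed

lemma mem_closed_subspace_if_orthogonal_to_complement:
  fixes S :: "'a::{real_inner, complete_space} set"
  assumes "subspace S" "closed S" "\<And>v. \<forall>s\<in>S. inner s v = 0 \<Longrightarrow> inner x v = 0"
  shows "x \<in> S"
proof -
  obtain p where "p \<in> S" and perp: "\<forall>s\<in>S. inner (x - p) s = 0"
    using orthogonal_projection_exists[OF assms(1,2)] by blast
  have "inner x (x - p) = 0" using perp by (intro assms(3)) (simp add: inner_commute)
  moreover have "inner p (x - p) = 0" using perp \<open>p \<in> S\<close> by (simp add: inner_commute)
  ultimately have "inner (x - p) (x - p) = 0" by (simp add: inner_diff_left)
  then show ?thesis using \<open>p \<in> S\<close> by simp
qed

lemma closed_subspace_eq_UNIV:
  fixes G S :: "'a::{real_inner, complete_space} set"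
  assumes "subspace G" "closed G" "subspace S" "closed S"
    and complement: "{v. \<forall>s\<in>S. inner s v = 0} \<subseteq> G"
    and "A \<subseteq> G" and total: "\<And>x. x \<in> S \<Longrightarrow> \<forall>a\<in>A. inner a x = 0 \<Longrightarrow> x = 0"
  shows "G = UNIV"
proof -
  have "h \<in> G" for h
  proof -
    obtain p where "p \<in> G" and perp: "\<forall>g\<in>G. inner (h - p) g = 0"
      using orthogonal_projection_exists[OF assms(1,2)] by blast
    have "h - p \<in> S"
      using assms(3,4) by (rule mem_closed_subspace_if_orthogonal_to_complement)
        (use complement perp in blast)
    moreover have "\<forall>a\<in>A. inner a (h - p) = 0" using \<open>A \<subseteq> G\<close> perp by (auto simp: inner_commute)
    ultimately show "h \<in> G" using total \<open>p \<in> G\<close> by fastforce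
  qed
  then show ?thesis by blast
qed

lemma countable_orthogonal_complement_test:
  fixes S :: "'a::{real_inner, complete_space, second_countable_topology} set"
  assumes "subspace S" "closed S"
  obtains E where "countable E" "\<And>e s. e \<in> E \<Longrightarrow> s \<in> S \<Longrightarrow> inner e s = 0"
    "\<And>x. \<forall>e\<in>E. inner e x = 0 \<Longrightarrow> x \<in> S"
proof -
  obtain proj where proj_in: "\<And>x. proj x \<in> S" and proj_perp: "\<And>x s. s \<in> S \<Longrightarrow> inner (x - proj x) s = 0"
    using orthogonal_projection_exists[OF assms] by metis
  obtain D :: "'a set" where "countable D" and dense: "\<And>X. open X \<Longrightarrow> X \<noteq> {} \<Longrightarrow> \<exists>d\<in>D. d \<in> X"
    using countable_dense_setE by blast
  have "x \<in> S" if x_perp: "\<forall>d\<in>D. inner (d - proj d) x = 0" for x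
  proof (rule ccontr)
    assume "x \<notin> S"
    \<comment> \<open>Both sides equal the inner product of the two complementary components.\<close>
    have "inner d (x - proj x) = inner (d - proj d) x" for d
      using proj_perp[OF proj_in, of d "x"] proj_perp[OF proj_in, of x d]
      by (simp add: inner_diff_left inner_diff_right inner_commute)
    then have D_perp: "\<forall>d\<in>D. inner d (x - proj x) = 0" using x_perp by simp
    have "x - proj x \<in> {d. 0 < inner d (x - proj x)}"
      using \<open>x \<notin> S\<close> proj_in[of x] by auto
    moreover have "open {d. 0 < inner d (x - proj x)}"
      by (intro open_Collect_less continuous_intros)
    ultimately show False using dense D_perp by fastforce
  qed
  then show ?thesis
    using \<open>countable D\<close> proj_perp
    by (intro that[of "(\<lambda>d. d - proj d) ` D"]) auto
qed

lemma RKHS_eq_0_if_orthogonal_features: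
  assumes RKHS: "is_RKHS S evf K" and "x \<in> S" and perp: "\<forall>t. inner (K t) x = 0"
  shows "x = 0"
proof -
  have "subspace S" and inj: "inj_on evf S"
    and lin: "\<And>a b x y. x \<in> S \<Longrightarrow> y \<in> S \<Longrightarrow> evf (a *\<^sub>R x + b *\<^sub>R y) = (\<lambda>t. a * evf x t + b * evf y t)"
    and reproducing: "\<And>t h. h \<in> S \<Longrightarrow> inner (K t) h = evf h t"
    using RKHS unfolding is_RKHS_def by blast+
  have "0 \<in> S" using \<open>subspace S\<close> by (rule subspace_0)
  have "evf (0 *\<^sub>R 0 + 0 *\<^sub>R 0) = (\<lambda>t. 0 * evf 0 t + 0 * evf 0 t)"
    using lin[OF \<open>0 \<in> S\<close> \<open>0 \<in> S\<close>] .
  then have "evf 0 = evf x" using reproducing[OF \<open>x \<in> S\<close>] perp by auto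
  then show ?thesis using inj \<open>x \<in> S\<close> \<open>0 \<in> S\<close> by (simp add: inj_on_eq_iff)
qed

lemma L2_lin_comb:
  assumes "f \<in> L2 M" "g \<in> L2 M"
  shows "(\<lambda>z. a * f z + b * g z) \<in> L2 M"
proof -
  have [measurable]: "f \<in> borel_measurable M" "g \<in> borel_measurable M"
    and "integrable M (\<lambda>z. (f z)\<^sup>2)" "integrable M (\<lambda>z. (g z)\<^sup>2)"
    using assms by (auto simp: L2_def)
  have "integrable M (\<lambda>z. (a * f z + b * g z)\<^sup>2)"
  proof (rule Bochner_Integration.integrable_bound)
    show "integrable M (\<lambda>z. 2 * (a * f z)\<^sup>2 + 2 * (b * g z)\<^sup>2)"
      using \<open>integrable M (\<lambda>z. (f z)\<^sup>2)\<close> \<open>integrable M (\<lambda>z. (g z)\<^sup>2)\<close>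
      by (simp add: power_mult_distrib)
    have "(u + v)\<^sup>2 \<le> 2 * u\<^sup>2 + 2 * v\<^sup>2" for u v :: real
      using sum_squares_bound[of u v] by (simp add: power2_sum)
    then show "AE z in M. norm ((a * f z + b * g z)\<^sup>2) \<le> norm (2 * (a * f z)\<^sup>2 + 2 * (b * g z)\<^sup>2)"
      by simp
  qed measurable
  then show ?thesis unfolding L2_def by auto
qed

lemma L2_diff:
  assumes "f \<in> L2 M" "g \<in> L2 M"
  shows "(\<lambda>z. f z - g z) \<in> L2 M"
  using L2_lin_comb[OF assms, of 1 "-1"] by simp

lemma integrable_mult_L2:
  assumes "f \<in> L2 M" "g \<in> L2 M"
  shows "integrable M (\<lambda>z. f z * g z)"
proof (rule Bochner_Integration.integrable_bound)
  show "integrable M (\<lambda>z. (f z)\<^sup>2 + (g z)\<^sup>2)"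
    using assms by (auto simp: L2_def)
  have "\<bar>u * v\<bar> \<le> u\<^sup>2 + v\<^sup>2" for u v :: real
  proof -
    have "\<bar>u * v\<bar> \<le> 2 * \<bar>u * v\<bar>" by simp
    also have "\<dots> \<le> u\<^sup>2 + v\<^sup>2"
      using sum_squares_bound[of "\<bar>u\<bar>" "\<bar>v\<bar>"] by (simp add: abs_mult mult.assoc)
    finally show ?thesis .
  qed
  then show "AE z in M. norm (f z * g z) \<le> norm ((f z)\<^sup>2 + (g z)\<^sup>2)"
    by simp
qed (use assms in \<open>auto simp: L2_def\<close>)

lemma integral_mult_lin_comb_L2:
  assumes "f \<in> L2 M" "g \<in> L2 M" "h \<in> L2 M"
  shows "(\<integral>z. h z * (a * f z + b * g z) \<partial>M) = a * (\<integral>z. h z * f z \<partial>M) + b * (\<integral>z. h z * g z \<partial>M)"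
proof -
  have "integrable M (\<lambda>z. h z * f z)" "integrable M (\<lambda>z. h z * g z)"
    using assms by (auto intro: integrable_mult_L2)
  then show ?thesis by (simp add: distrib_left mult.left_commute)
qed

lemma AE_eq_0_if_integral_square_eq_0:
  assumes "f \<in> L2 M" "(\<integral>z. (f z)\<^sup>2 \<partial>M) = 0"
  shows "AE z in M. f z = 0"
proof -
  have "AE z in M. (f z)\<^sup>2 = 0"
    using assms integral_nonneg_eq_0_iff_AE[of M "\<lambda>z. (f z)\<^sup>2"] by (simp add: L2_def)
  then show ?thesis by simp
qed

lemma integral_square_diff_le_L2:
  assumes "f \<in> L2 M" "g \<in> L2 M"
  shows "(\<integral>z. (f z - g z)\<^sup>2 \<partial>M) \<le> 2 * (\<integral>z. (f z)\<^sup>2 \<partial>M) + 2 * (\<integral>z. (g z)\<^sup>2 \<partial>M)"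
proof -
  have "(f z - g z)\<^sup>2 \<le> 2 * (f z)\<^sup>2 + 2 * (g z)\<^sup>2" for z
    using sum_squares_bound[of "f z" "- g z"] by (simp add: power2_diff)
  with L2_diff[OF assms] have "(\<integral>z. (f z - g z)\<^sup>2 \<partial>M) \<le> (\<integral>z. 2 * (f z)\<^sup>2 + 2 * (g z)\<^sup>2 \<partial>M)"
    using assms by (intro integral_mono) (auto simp: L2_def)
  then show ?thesis using assms by (simp add: L2_def)
qed

lemma
  fixes g :: "'z \<Rightarrow> 'h::{real_inner, second_countable_topology}"
  assumes [measurable]: "g \<in> borel_measurable M" and int: "integrable M (\<lambda>z. (norm (g z))\<^sup>2)"
  shows L2_inner_right: "(\<lambda>z. inner h (g z)) \<in> L2 M"
    and integral_inner_right_square_le: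
      "(\<integral>z. (inner h (g z))\<^sup>2 \<partial>M) \<le> (norm h)\<^sup>2 * (\<integral>z. (norm (g z))\<^sup>2 \<partial>M)"
proof -
  have bound: "(inner h (g z))\<^sup>2 \<le> (norm h)\<^sup>2 * (norm (g z))\<^sup>2" for z
    using Cauchy_Schwarz_ineq[of h "g z"] by (simp add: power2_norm_eq_inner)
  have int': "integrable M (\<lambda>z. (norm h)\<^sup>2 * (norm (g z))\<^sup>2)"
    using int by simp
  have int_inner: "integrable M (\<lambda>z. (inner h (g z))\<^sup>2)"
  proof (rule Bochner_Integration.integrable_bound[OF int'])
    show "AE z in M. norm ((inner h (g z))\<^sup>2) \<le> norm ((norm h)\<^sup>2 * (norm (g z))\<^sup>2)"
      using bound by simp
  qed measurable
  then show "(\<lambda>z. inner h (g z)) \<in> L2 M" by (simp add: L2_def)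
  show "(\<integral>z. (inner h (g z))\<^sup>2 \<partial>M) \<le> (norm h)\<^sup>2 * (\<integral>z. (norm (g z))\<^sup>2 \<partial>M)"
    using integral_mono[OF int_inner int' bound] by simp
qed

lemma
  fixes X :: "'a::real_normed_vector \<Rightarrow> 'z \<Rightarrow> real"
  assumes L2: "\<And>h. X h \<in> L2 M"
    and lin: "\<And>a b h k. AE z in M. X (a *\<^sub>R h + b *\<^sub>R k) z = a * X h z + b * X k z"
    and bound: "\<And>h. (\<integral>z. (X h z)\<^sup>2 \<partial>M) \<le> C * (norm h)\<^sup>2"
  shows subspace_AE_zero_set: "subspace {h. AE z in M. X h z = 0}"
    and closed_AE_zero_set: "closed {h. AE z in M. X h z = 0}"
proof -
  show "subspace {h. AE z in M. X h z = 0}"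
  proof (rule subspaceI; unfold mem_Collect_eq)
    show "AE z in M. X 0 z = 0" using lin[of 0 0 0 0] by simp
    show "AE z in M. X (h + k) z = 0" if "AE z in M. X h z = 0" "AE z in M. X k z = 0" for h k
      using lin[of 1 h 1 k] that by eventually_elim simp
    show "AE z in M. X (c *\<^sub>R h) z = 0" if "AE z in M. X h z = 0" for c h
      using lin[of c h 0 h] that by eventually_elim simp
  qed
  show "closed {h. AE z in M. X h z = 0}"
  proof (rule closed_sequential_limits[THEN iffD2], intro allI impI, clarsimp)
    fix hs h assume hs_zero: "\<forall>n. AE z in M. X (hs n) z = 0" and "hs \<longlonglongrightarrow> h"
    have "(\<integral>z. (X h z)\<^sup>2 \<partial>M) \<le> C * (norm (h - hs n))\<^sup>2" for n
    proof -
      have "AE z in M. X h z = X (h - hs n) z"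
        using lin[of 1 "h - hs n" 1 "hs n"] spec[OF hs_zero, of n] by eventually_elim simp
      then have "(\<integral>z. (X h z)\<^sup>2 \<partial>M) = (\<integral>z. (X (h - hs n) z)\<^sup>2 \<partial>M)"
        using L2 by (intro integral_cong_AE) (auto simp: L2_def)
      then show ?thesis using bound by simp
    qed
    moreover have "(\<lambda>n. C * (norm (h - hs n))\<^sup>2) \<longlonglongrightarrow> C * (norm (h - h))\<^sup>2"
      by (intro tendsto_intros \<open>hs \<longlonglongrightarrow> h\<close>)
    ultimately have "(\<integral>z. (X h z)\<^sup>2 \<partial>M) \<le> C * (norm (h - h))\<^sup>2"
      using LIMSEQ_le_const by blast
    then show "AE z in M. X h z = 0"
      using L2 by (intro AE_eq_0_if_integral_square_eq_0) (auto intro: antisym)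
  qed
qed

lemma
  assumes "is_adjoint M TS dotnu star" "TS \<subseteq> L2 M"
  shows adjoint_L2: "star h \<in> L2 M"
    and adjoint_integral_square: "(\<integral>z. (star h z)\<^sup>2 \<partial>M) = inner (dotnu (star h)) h"
  using assms unfolding is_adjoint_def by (auto simp: power2_eq_square)

lemma adjoint_AE_eq_0_if_orthogonal:
  assumes "is_adjoint M TS dotnu star" "TS \<subseteq> L2 M" "\<forall>s\<in>TS. inner (dotnu s) k = 0"
  shows "AE z in M. star k z = 0"
proof (rule AE_eq_0_if_integral_square_eq_0)
  show "star k \<in> L2 M" using assms(1,2) by (rule adjoint_L2)
  have "star k \<in> TS" using assms(1) by (simp add: is_adjoint_def)
  then show "(\<integral>z. (star k z)\<^sup>2 \<partial>M) = 0"
    using assms by (simp add: adjoint_integral_square)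
qed

lemma adjoint_AE_lin_comb:
  assumes adj: "is_adjoint M TS dotnu star" and TS: "TS \<subseteq> L2 M"
  shows "AE z in M. star (a *\<^sub>R h + b *\<^sub>R k) z = a * star h z + b * star k z"
proof -
  have in_TS: "\<And>h. star h \<in> TS" and L2: "\<And>h. star h \<in> L2 M"
    and adjoint: "\<And>h s. s \<in> TS \<Longrightarrow> inner (dotnu s) h = (\<integral>z. s z * star h z \<partial>M)"
    using adj TS unfolding is_adjoint_def by auto
  define u where "u = star (a *\<^sub>R h + b *\<^sub>R k)"
  define w where "w = (\<lambda>z. a * star h z + b * star k z)"
  define d where "d = (\<lambda>z. 1 * u z + (-1) * w z)"
  have w_L2: "w \<in> L2 M" unfolding w_def by (intro L2_lin_comb L2)
  have d_L2: "d \<in> L2 M" unfolding d_def u_def by (intro L2_lin_comb L2 w_L2)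
  \<comment> \<open>\<open>d\<close> is orthogonal in \<open>L2\<close> to the tangent space, yet a combination of its elements.\<close>
  have d_perp: "(\<integral>z. s z * d z \<partial>M) = 0" if "s \<in> TS" for s
  proof -
    have "s \<in> L2 M" using that TS by blast
    then have "(\<integral>z. s z * d z \<partial>M) = (\<integral>z. s z * u z \<partial>M) - (\<integral>z. s z * w z \<partial>M)"
      unfolding d_def
      using integral_mult_lin_comb_L2[OF L2 w_L2 \<open>s \<in> L2 M\<close>, where a=1 and b="-1"] by (simp add: u_def)
    also have "\<dots> = inner (dotnu s) (a *\<^sub>R h + b *\<^sub>R k) - (a * inner (dotnu s) h + b * inner (dotnu s) k)"
      using \<open>s \<in> L2 M\<close> unfolding w_def u_def
      by (simp add: integral_mult_lin_comb_L2 L2 adjoint[OF that])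
    finally show ?thesis by (simp add: inner_add_right)
  qed
  have "(\<integral>z. (d z)\<^sup>2 \<partial>M) = (\<integral>z. d z * (1 * u z + (-1) * w z) \<partial>M)"
    by (simp add: power2_eq_square d_def)
  also have "\<dots> = (\<integral>z. d z * u z \<partial>M) - (\<integral>z. d z * w z \<partial>M)"
    using integral_mult_lin_comb_L2[OF L2 w_L2 d_L2, where a=1 and b="-1"] by (simp add: u_def)
  also have "(\<integral>z. d z * w z \<partial>M) = a * (\<integral>z. d z * star h z \<partial>M) + b * (\<integral>z. d z * star k z \<partial>M)"
    unfolding w_def by (rule integral_mult_lin_comb_L2[OF L2 L2 d_L2])
  also have "(\<integral>z. d z * u z \<partial>M) - (a * (\<integral>z. d z * star h z \<partial>M) + b * (\<integral>z. d z * star k z \<partial>M)) = 0"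
    using d_perp[OF in_TS] by (simp add: u_def mult.commute)
  finally have "(\<integral>z. (d z)\<^sup>2 \<partial>M) = 0" .
  then have "AE z in M. d z = 0" by (rule AE_eq_0_if_integral_square_eq_0[OF d_L2])
  then show ?thesis by eventually_elim (simp add: d_def u_def w_def)
qed

lemma adjoint_integral_square_le:
  assumes adj: "is_adjoint M TS dotnu star" and TS: "TS \<subseteq> L2 M"
    and bound: "\<And>f. f \<in> TS \<Longrightarrow> norm (dotnu f) \<le> C * L2_norm M f"
  shows "(\<integral>z. (star h z)\<^sup>2 \<partial>M) \<le> C\<^sup>2 * (norm h)\<^sup>2"
proof -
  define N where "N = L2_norm M (star h)"
  have "0 \<le> N" by (simp add: N_def L2_norm_def)
  have N_sq: "N\<^sup>2 = (\<integral>z. (star h z)\<^sup>2 \<partial>M)" by (simp add: N_def L2_norm_def)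
  also have "\<dots> = inner (dotnu (star h)) h" using adj TS by (rule adjoint_integral_square)
  also have "\<dots> \<le> norm (dotnu (star h)) * norm h" by (rule norm_cauchy_schwarz)
  also have "\<dots> \<le> C * N * norm h"
    using adj bound unfolding is_adjoint_def N_def by (simp add: mult_right_mono)
  finally have "N * N \<le> N * (C * norm h)" by (simp add: power2_eq_square algebra_simps)
  then have "N \<le> C * norm h \<or> N = 0" using \<open>0 \<le> N\<close> by (auto simp: mult_le_cancel_left)
  then have "N\<^sup>2 \<le> (C * norm h)\<^sup>2" using \<open>0 \<le> N\<close> by (auto intro: power_mono)
  then show ?thesis by (simp add: N_sq power_mult_distrib)
qed

lemma AE_all_eq_if_separable_process:
  assumes "separable_process M X" and eq: "\<And>h. AE z in M. X h z = Y h z"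
    and cont: "\<And>z h. isCont (\<lambda>h. Y h z) h"
  shows "AE z in M. \<forall>h. X h z = Y h z"
proof -
  obtain H' where "countable H'" and
    approx: "AE z in M. \<forall>h. \<exists>hs. (\<forall>j. hs j \<in> H') \<and> hs \<longlonglongrightarrow> h \<and> (\<lambda>j. X (hs j) z) \<longlonglongrightarrow> X h z"
    using assms(1) unfolding separable_process_def by blast
  have "AE z in M. \<forall>h\<in>H'. X h z = Y h z"
    using eq by (simp add: AE_ball_countable[OF \<open>countable H'\<close>])
  then show ?thesis using approx
  proof eventually_elim
    case (elim z)
    show "\<forall>h. X h z = Y h z"
    proof
      fix h
      obtain hs where "\<And>j. hs j \<in> H'" "hs \<longlonglongrightarrow> h" and X_lim: "(\<lambda>j. X (hs j) z) \<longlonglongrightarrow> X h z"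
        using elim(2) by blast
      then have "(\<lambda>j. X (hs j) z) \<longlonglongrightarrow> Y h z"
        using elim(1) isCont_tendsto_compose[OF cont] by simp
      then show "X h z = Y h z" using X_lim LIMSEQ_unique by blast
    qed
  qed
qed

lemma EIF_AE_eq_feature_representation:
  fixes star :: "'h::{real_inner, complete_space, second_countable_topology} \<Rightarrow> 'z \<Rightarrow> real"
  assumes adj: "is_adjoint M TS dotnu star" and TS: "TS \<subseteq> L2 M"
    and RKHS: "is_RKHS (dotnu ` TS) evf K" and EIF: "has_EIF M star \<phi>"
  shows "AE z in M. \<phi> z \<in> dotnu ` TS \<and> evf (\<phi> z) = (\<lambda>t. star (K t) z)"
proof -
  have "subspace (dotnu ` TS)" "closed (dotnu ` TS)"
    and reproducing: "\<And>t h. h \<in> dotnu ` TS \<Longrightarrow> inner (K t) h = evf h t"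
    using RKHS unfolding is_RKHS_def by blast+
  obtain E where "countable E" and E_perp: "\<And>e s. e \<in> E \<Longrightarrow> s \<in> dotnu ` TS \<Longrightarrow> inner e s = 0"
    and E_test: "\<And>x. \<forall>e\<in>E. inner e x = 0 \<Longrightarrow> x \<in> dotnu ` TS"
    using countable_orthogonal_complement_test[OF \<open>subspace (dotnu ` TS)\<close> \<open>closed (dotnu ` TS)\<close>]
    by blast
  have "AE z in M. star e z = 0" if "e \<in> E" for e
    using adj TS by (rule adjoint_AE_eq_0_if_orthogonal) (simp add: E_perp[OF that] inner_commute)
  then have "AE z in M. \<forall>e\<in>E. star e z = 0"
    by (simp add: AE_ball_countable[OF \<open>countable E\<close>])
  with EIF show ?thesis unfolding has_EIF_def
  proof eventually_elim
    case (elim z)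
    then have "\<phi> z \<in> dotnu ` TS" by (intro E_test) simp
    with elim(1) show ?case by (simp add: reproducing)
  qed
qed

lemma
  fixes star :: "'h::{real_inner, second_countable_topology} \<Rightarrow> 'z \<Rightarrow> real"
  assumes adj: "is_adjoint M TS dotnu star" and TS: "TS \<subseteq> L2 M"
    and bound: "\<And>f. f \<in> TS \<Longrightarrow> norm (dotnu f) \<le> C * L2_norm M f"
    and g_meas [measurable]: "g \<in> borel_measurable M"
    and g_int: "integrable M (\<lambda>z. (norm (g z))\<^sup>2)"
  shows subspace_adjoint_eq_inner: "subspace {h. AE z in M. star h z = inner h (g z)}"
    and closed_adjoint_eq_inner: "closed {h. AE z in M. star h z = inner h (g z)}"
proof -
  define X where "X h z = star h z - inner h (g z)" for h z
  have G_eq: "{h. AE z in M. star h z = inner h (g z)} = {h. AE z in M. X h z = 0}"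
    by (simp add: X_def)
  have X_L2: "X h \<in> L2 M" for h
    unfolding X_def using adjoint_L2[OF adj TS] L2_inner_right[OF g_meas g_int]
    by (intro L2_diff) auto
  have X_lin: "AE z in M. X (a *\<^sub>R h + b *\<^sub>R k) z = a * X h z + b * X k z" for a b h k
    using adjoint_AE_lin_comb[OF adj TS]
    by eventually_elim (simp add: X_def algebra_simps)
  have X_bound: "(\<integral>z. (X h z)\<^sup>2 \<partial>M) \<le> 2 * (C\<^sup>2 + (\<integral>z. (norm (g z))\<^sup>2 \<partial>M)) * (norm h)\<^sup>2" for h
  proof -
    have "(\<integral>z. (X h z)\<^sup>2 \<partial>M) \<le> 2 * (\<integral>z. (star h z)\<^sup>2 \<partial>M) + 2 * (\<integral>z. (inner h (g z))\<^sup>2 \<partial>M)"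
      unfolding X_def
      by (rule integral_square_diff_le_L2[OF adjoint_L2[OF adj TS] L2_inner_right[OF g_meas g_int]])
    also have "\<dots> \<le> 2 * (C\<^sup>2 * (norm h)\<^sup>2) + 2 * ((norm h)\<^sup>2 * (\<integral>z. (norm (g z))\<^sup>2 \<partial>M))"
      using adjoint_integral_square_le[OF adj TS bound] integral_inner_right_square_le[OF g_meas g_int]
      by (intro add_mono mult_left_mono) auto
    finally show ?thesis by (simp add: algebra_simps)
  qed
  show "subspace {h. AE z in M. star h z = inner h (g z)}"
    unfolding G_eq using X_L2 X_lin X_bound by (rule subspace_AE_zero_set)
  show "closed {h. AE z in M. star h z = inner h (g z)}"
    unfolding G_eq using X_L2 X_lin X_bound by (rule closed_AE_zero_set)
qed

lemma has_EIF_if_square_integrable_representation: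
  fixes star :: "'h::{real_inner, complete_space, second_countable_topology} \<Rightarrow> 'z \<Rightarrow> real"
  assumes adj: "is_adjoint M TS dotnu star" and TS: "TS \<subseteq> L2 M"
    and RKHS: "is_RKHS (dotnu ` TS) evf K"
    and bound: "\<And>f. f \<in> TS \<Longrightarrow> norm (dotnu f) \<le> C * L2_norm M f"
    and "separable_process M star"
    and g_meas: "g \<in> borel_measurable M"
    and g_int: "integrable M (\<lambda>z. (norm (g z))\<^sup>2)"
    and g_rep: "AE z in M. g z \<in> dotnu ` TS \<and> evf (g z) = (\<lambda>t. star (K t) z)"
  shows "has_EIF M star g"
proof -
  define G where "G = {h. AE z in M. star h z = inner h (g z)}"
  have "subspace (dotnu ` TS)" "closed (dotnu ` TS)"
    and reproducing: "\<And>t h. h \<in> dotnu ` TS \<Longrightarrow> inner (K t) h = evf h t"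
    using RKHS unfolding is_RKHS_def by blast+
  have "G = UNIV"
  proof (rule closed_subspace_eq_UNIV)
    show "subspace G"
      unfolding G_def using adj TS bound g_meas g_int by (rule subspace_adjoint_eq_inner)
    show "closed G"
      unfolding G_def using adj TS bound g_meas g_int by (rule closed_adjoint_eq_inner)
    show "{v. \<forall>s\<in>dotnu ` TS. inner s v = 0} \<subseteq> G"
    proof safe
      fix v assume v_perp: "\<forall>s\<in>dotnu ` TS. inner s v = 0"
      have "AE z in M. star v z = 0"
        using adj TS by (rule adjoint_AE_eq_0_if_orthogonal) (use v_perp in simp)
      with g_rep show "v \<in> G"
        unfolding G_def mem_Collect_eq by eventually_elim (metis v_perp inner_commute)
    qed
    show "range K \<subseteq> G"
    proof safe
      fix t
      from g_rep show "K t \<in> G"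
        unfolding G_def mem_Collect_eq by eventually_elim (simp add: reproducing)
    qed
    show "x = 0" if "x \<in> dotnu ` TS" "\<forall>k\<in>range K. inner k x = 0" for x
      using RKHS that by (intro RKHS_eq_0_if_orthogonal_features) auto
  qed (fact+)
  then show ?thesis
    unfolding has_EIF_def G_def using \<open>separable_process M star\<close>
    by (intro AE_all_eq_if_separable_process) (auto simp: set_eq_iff)
qed

theorem theorem1:
  fixes lam :: "'z::polish_space measure"
    and model :: "'z measure set"
    and P :: "'z measure"
    and nu :: "'z measure \<Rightarrow> 'h::{real_inner, polish_space}"
    and dotnu :: "('z \<Rightarrow> real) \<Rightarrow> 'h"
    and dotnu_star :: "'h \<Rightarrow> 'z \<Rightarrow> real"
    and evf :: "'h \<Rightarrow> 'T \<Rightarrow> real"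
    and K :: "'T \<Rightarrow> 'h"
  assumes "sigma_finite_measure lam" and "sets lam = sets borel"
    and "\<forall>Q\<in>model. prob_space Q \<and> sets Q = sets borel \<and> absolutely_continuous lam Q"
    and "P \<in> model"
    and "pathwise_differentiable lam model P nu dotnu"
    and "is_adjoint P (tangent_space lam model P) dotnu dotnu_star"
    and "separable_process P dotnu_star"
    and "is_RKHS (dotnu ` tangent_space lam model P) evf K"
  shows "(\<forall>\<phi>. has_EIF P dotnu_star \<phi> \<longrightarrow>
            (AE z in P. \<phi> z \<in> dotnu ` tangent_space lam model P \<and>
                        evf (\<phi> z) = (\<lambda>t. dotnu_star (K t) z)))
       \<and> ((\<exists>g. g \<in> borel_measurable P \<and> integrable P (\<lambda>z. (norm (g z))^2) \<and>
             (AE z in P. g z \<in> dotnu ` tangent_space lam model P \<and>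
                         evf (g z) = (\<lambda>t. dotnu_star (K t) z)))
          \<longrightarrow> (\<exists>\<phi>. has_EIF P dotnu_star \<phi>))"
proof -
  have TS: "tangent_space lam model P \<subseteq> L2 P"
    by (auto simp: tangent_space_def)
  obtain C where "\<And>f. f \<in> tangent_space lam model P \<Longrightarrow> norm (dotnu f) \<le> C * L2_norm P f"
    using assms(5) unfolding pathwise_differentiable_def by blast
  then show ?thesis
    using EIF_AE_eq_feature_representation[OF assms(6) TS assms(8)]
      has_EIF_if_square_integrable_representation[OF assms(6) TS assms(8) _ assms(7)]
    by blast
qed

end
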